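(* Let $\mathcal L$ be an expansion of the language of ordered groups and let $G$ be an $\mathcal L$-structure whose reduct is a densely ordered abelian group which is definably complete. Fix an $\mathcal L$-formula $\psi(t,y)$ (possibly with parameters) such that each set $\psi(t,G)$, $t\in G$, is pseudo-finite, $\psi(t_1,G)\subseteq\psi(t_2,G)$ whenever $t_1<t_2$, and $\bigcup_{t\in G}\psi(t,G)=G$. Then for all $a<b$ in $G$, the interval $[a,b]$ is definably compact (with respect to $\psi$): for every $\mathcal L$-formula $\varphi(x,y)$ (with parameters) such that each $\varphi(u,G)$, $u\in G$, is open and $[a,b]\subseteq\bigcup_{u\in G}\varphi(u,G)$, there exists $t_0\in G$ with $[a,b]\subseteq\bigcup_{u\in\psi(t_0,G)}\varphi(u,G)$.
   Context: Definable means definable by an $\mathcal L$-formula with parameters from $G$; for a formula $\varphi(x,y)$ and $a\in G$, $\varphi(a,G)=\{b\in G: G\models\varphi(a,b)\}$. $G$ carries the order topology (base: open intervals). A Dedekind cut is a nonempty downward closed subset of $G$; a gap is a cut $C\ne G$ with no least upper bound in $G$; $G$ is definably complete if it has no definable gap. A definable subset $D\subseteq G$ is pseudo-finite if it is discrete, closed, and bounded. *)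

theory Defs
  imports Main
begin

text \<open>A first-order expansion of the language of ordered groups on a universe of type 'a,
  together with all parameters from G, is represented (van den Dries style) by the family
  S n of its definable subsets of G^n, where tuples of length n are lists of length n.
  The definable sets (with parameters) of any L-structure form such a family, and every such
  family is the family of definable sets of a suitable expansion (one predicate per set).\<close>

definition definable_structure :: "(nat \<Rightarrow> ('a::linordered_ab_group_add) list set set) \<Rightarrow> bool" where
  "definable_structure S \<longleftrightarrow>
     (\<forall>n. \<forall>A\<in>S n. \<forall>xs\<in>A. length xs = n) \<and>
     (\<forall>n. {xs. length xs = n} \<in> S n) \<and>
     (\<forall>n. \<forall>A\<in>S n. \<forall>B\<in>S n. A \<union> B \<in> S n) \<and>
     (\<forall>n. \<forall>A\<in>S n. {xs. length xs = n} - A \<in> S n) \<and>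
     (\<forall>n. \<forall>A\<in>S n. {xs @ [x] | xs x. xs \<in> A} \<in> S (Suc n)) \<and>
     (\<forall>n. \<forall>A\<in>S n. {x # xs | xs x. xs \<in> A} \<in> S (Suc n)) \<and>
     (\<forall>n i j. i < n \<longrightarrow> j < n \<longrightarrow> {xs. length xs = n \<and> xs ! i = xs ! j} \<in> S n) \<and>
     (\<forall>n. \<forall>A\<in>S (Suc n). butlast ` A \<in> S n) \<and>
     (\<forall>c. {[c]} \<in> S 1) \<and>
     {[x, y, z] | x y z. z = x + y} \<in> S 3 \<and>
     {[x, y] | x y. x < y} \<in> S 2"

definition definable1 :: "(nat \<Rightarrow> 'a list set set) \<Rightarrow> 'a set \<Rightarrow> bool" where
  "definable1 S X \<longleftrightarrow> (\<lambda>x. [x]) ` X \<in> S 1"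

definition fiber :: "'a list set \<Rightarrow> 'a \<Rightarrow> 'a set" where
  "fiber P a = {b. [a, b] \<in> P}"

definition open_G :: "('a::linorder) set \<Rightarrow> bool" where
  "open_G U \<longleftrightarrow> (\<forall>x\<in>U. \<exists>a b. a < x \<and> x < b \<and> {a<..<b} \<subseteq> U)"

definition closed_G :: "('a::linorder) set \<Rightarrow> bool" where
  "closed_G D \<longleftrightarrow> open_G (- D)"

definition discrete_G :: "('a::linorder) set \<Rightarrow> bool" where
  "discrete_G D \<longleftrightarrow> (\<forall>x\<in>D. \<exists>U. open_G U \<and> U \<inter> D = {x})"

definition bounded_G :: "('a::linorder) set \<Rightarrow> bool" where
  "bounded_G D \<longleftrightarrow> (\<exists>l u. D \<subseteq> {l..u})"

definition pseudo_finite :: "(nat \<Rightarrow> 'a list set set) \<Rightarrow> ('a::linorder) set \<Rightarrow> bool" where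
  "pseudo_finite S D \<longleftrightarrow> definable1 S D \<and> discrete_G D \<and> closed_G D \<and> bounded_G D"

definition is_cut :: "('a::linorder) set \<Rightarrow> bool" where
  "is_cut C \<longleftrightarrow> C \<noteq> {} \<and> (\<forall>x\<in>C. \<forall>y. y \<le> x \<longrightarrow> y \<in> C)"

definition has_lub :: "('a::linorder) set \<Rightarrow> bool" where
  "has_lub C \<longleftrightarrow> (\<exists>s. (\<forall>x\<in>C. x \<le> s) \<and> (\<forall>u. (\<forall>x\<in>C. x \<le> u) \<longrightarrow> s \<le> u))"

definition is_gap :: "('a::linorder) set \<Rightarrow> bool" where
  "is_gap C \<longleftrightarrow> is_cut C \<and> C \<noteq> UNIV \<and> \<not> has_lub C"

definition definably_complete :: "(nat \<Rightarrow> ('a::linorder) list set set) \<Rightarrow> bool" where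
  "definably_complete S \<longleftrightarrow> (\<forall>C::'a set. definable1 S C \<longrightarrow> \<not> is_gap C)"

end

theory Submission
  imports Defs
begin

text \<open>Let C be the set of all x such that [a, x] is covered by the sets \<phi>(u, G) with u ranging
  over a single \<psi>(t, G). C is definable and downward closed and contains a. If b were not in C,
  definable completeness would give a supremum s of C in [a, b]; an open set \<phi>(u, G) around s,
  together with monotonicity of \<psi>, lets a single \<psi>(t, G) cover a little beyond s, contradicting
  the choice of s. Only monotonicity and exhaustiveness of the \<psi>(t, G) are used, not their
  pseudo-finiteness.\<close>

definition definable_pred :: "(nat \<Rightarrow> 'a list set set) \<Rightarrow> nat \<Rightarrow> ('a list \<Rightarrow> bool) \<Rightarrow> bool" where
  "definable_pred S n P \<longleftrightarrow> {xs. length xs = n \<and> P xs} \<in> S n"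

locale definable_sets =
  fixes S :: "nat \<Rightarrow> ('a::linordered_ab_group_add) list set set"
  assumes length_of_mem: "A \<in> S n \<Longrightarrow> xs \<in> A \<Longrightarrow> length xs = n"
    and tuples_mem: "{xs. length xs = n} \<in> S n"
    and Un_mem: "A \<in> S n \<Longrightarrow> B \<in> S n \<Longrightarrow> A \<union> B \<in> S n"
    and complement_mem: "A \<in> S n \<Longrightarrow> {xs. length xs = n} - A \<in> S n"
    and Cons_mem: "A \<in> S n \<Longrightarrow> {x # xs | xs x. xs \<in> A} \<in> S (Suc n)"
    and diagonal_mem: "i < n \<Longrightarrow> j < n \<Longrightarrow> {xs. length xs = n \<and> xs ! i = xs ! j} \<in> S n"
    and butlast_image_mem: "A \<in> S (Suc n) \<Longrightarrow> butlast ` A \<in> S n"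
    and singleton_mem: "{[c]} \<in> S 1"
    and less_mem: "{[x, y] | x y. x < y} \<in> S 2"

lemma definable_sets_if_definable_structure: "definable_structure S \<Longrightarrow> definable_sets S"
  unfolding definable_structure_def by unfold_locales (elim conjE; simp)+

context definable_sets
begin

lemma definable_pred_mem:
  assumes "A \<in> S n"
  shows "definable_pred S n (\<lambda>xs. xs \<in> A)"
proof -
  have "{xs. length xs = n \<and> xs \<in> A} = A"
    using length_of_mem[OF assms] by blast
  with assms show ?thesis unfolding definable_pred_def by simp
qed

lemma definable_pred_cong:
  assumes "definable_pred S n P" "\<And>xs. length xs = n \<Longrightarrow> P xs = Q xs"
  shows "definable_pred S n Q"
proof -
  have "{xs. length xs = n \<and> P xs} = {xs. length xs = n \<and> Q xs}"
    using assms(2) by blast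
  with assms(1) show ?thesis unfolding definable_pred_def by simp
qed

lemma definable_pred_disj:
  assumes "definable_pred S n P" "definable_pred S n Q"
  shows "definable_pred S n (\<lambda>xs. P xs \<or> Q xs)"
proof -
  have "{xs. length xs = n \<and> (P xs \<or> Q xs)} = {xs. length xs = n \<and> P xs} \<union> {xs. length xs = n \<and> Q xs}"
    by blast
  with assms show ?thesis unfolding definable_pred_def by (simp add: Un_mem)
qed

lemma definable_pred_neg:
  assumes "definable_pred S n P"
  shows "definable_pred S n (\<lambda>xs. \<not> P xs)"
proof -
  have "{xs. length xs = n \<and> \<not> P xs} = {xs. length xs = n} - {xs. length xs = n \<and> P xs}"
    by blast
  with assms show ?thesis unfolding definable_pred_def by (simp add: complement_mem)
qed

lemma definable_pred_conj:
  assumes "definable_pred S n P" "definable_pred S n Q"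
  shows "definable_pred S n (\<lambda>xs. P xs \<and> Q xs)"
proof -
  have "definable_pred S n (\<lambda>xs. \<not> (\<not> P xs \<or> \<not> Q xs))"
    using assms by (intro definable_pred_neg definable_pred_disj)
  then show ?thesis by (rule definable_pred_cong) simp
qed

lemma definable_pred_imp:
  "definable_pred S n P \<Longrightarrow> definable_pred S n Q \<Longrightarrow> definable_pred S n (\<lambda>xs. P xs \<longrightarrow> Q xs)"
  by (rule definable_pred_cong[OF definable_pred_disj[OF definable_pred_neg]]) auto

lemma definable_pred_ex:
  assumes "definable_pred S (Suc n) P"
  shows "definable_pred S n (\<lambda>xs. \<exists>x. P (xs @ [x]))"
proof -
  have "{xs. length xs = n \<and> (\<exists>x. P (xs @ [x]))} = butlast ` {xs. length xs = Suc n \<and> P xs}"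
  proof (intro set_eqI iffI)
    fix xs assume "xs \<in> {xs. length xs = n \<and> (\<exists>x. P (xs @ [x]))}"
    then obtain x where "length xs = n" "P (xs @ [x])" by blast
    then show "xs \<in> butlast ` {xs. length xs = Suc n \<and> P xs}"
      by (intro image_eqI[where x = "xs @ [x]"]) auto
  next
    fix xs assume "xs \<in> butlast ` {xs. length xs = Suc n \<and> P xs}"
    then obtain ys where ys: "length ys = Suc n" "P ys" "xs = butlast ys" by blast
    moreover obtain y zs where "ys = zs @ [y]" "length zs = n"
      using ys(1) by (metis length_Suc_conv_rev)
    ultimately show "xs \<in> {xs. length xs = n \<and> (\<exists>x. P (xs @ [x]))}" by auto
  qed
  with assms show ?thesis
    unfolding definable_pred_def by (simp add: butlast_image_mem)
qed

text \<open>The arity is passed as an equation m = Suc n so that these rules also apply to numeral arities.\<close>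

lemma definable_pred_exI:
  assumes "definable_pred S m P" "m = Suc n"
    and "\<And>xs. length xs = n \<Longrightarrow> Q xs \<longleftrightarrow> (\<exists>x. P (xs @ [x]))"
  shows "definable_pred S n Q"
  using definable_pred_ex[OF assms(1)[unfolded assms(2)]]
  by (rule definable_pred_cong) (simp add: assms(3))

lemma definable_pred_allI:
  assumes "definable_pred S m P" "m = Suc n"
    and "\<And>xs. length xs = n \<Longrightarrow> Q xs \<longleftrightarrow> (\<forall>x. P (xs @ [x]))"
  shows "definable_pred S n Q"
proof -
  have "definable_pred S n (\<lambda>xs. \<not> (\<exists>x. \<not> P (xs @ [x])))"
    using assms(1,2) by (intro definable_pred_neg definable_pred_ex) simp
  then show ?thesis by (rule definable_pred_cong) (simp add: assms(3))
qed

lemma definable_pred_ex_suffix: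
  "definable_pred S (n + m) P \<Longrightarrow> definable_pred S n (\<lambda>xs. \<exists>zs. length zs = m \<and> P (xs @ zs))"
proof (induction m arbitrary: P)
  case 0
  then have "definable_pred S n P" by simp
  then show ?case by (rule definable_pred_cong) simp
next
  case (Suc m)
  then have "definable_pred S (n + m) (\<lambda>ys. \<exists>x. P (ys @ [x]))"
    by (intro definable_pred_ex) simp
  then have "definable_pred S n (\<lambda>xs. \<exists>zs. length zs = m \<and> (\<exists>x. P ((xs @ zs) @ [x])))"
    by (rule Suc.IH)
  then show ?case
  proof (rule definable_pred_cong)
    fix xs :: "'a list"
    show "(\<exists>zs. length zs = m \<and> (\<exists>x. P ((xs @ zs) @ [x]))) \<longleftrightarrow> (\<exists>zs. length zs = Suc m \<and> P (xs @ zs))"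
      by (metis append.assoc length_Suc_conv_rev)
  qed
qed

lemma definable_pred_drop: "definable_pred S m P \<Longrightarrow> definable_pred S (k + m) (\<lambda>ws. P (drop k ws))"
proof (induction k)
  case (Suc k)
  then have "{x # xs | xs x. xs \<in> {ws. length ws = k + m \<and> P (drop k ws)}} \<in> S (Suc (k + m))"
    unfolding definable_pred_def by (intro Cons_mem) simp
  moreover have "{x # xs | xs x. xs \<in> {ws. length ws = k + m \<and> P (drop k ws)}}
      = {ws. length ws = Suc k + m \<and> P (drop (Suc k) ws)}"
  proof (intro set_eqI iffI)
    fix ws assume "ws \<in> {ws. length ws = Suc k + m \<and> P (drop (Suc k) ws)}"
    then show "ws \<in> {x # xs | xs x. xs \<in> {ws. length ws = k + m \<and> P (drop k ws)}}"
      by (cases ws) auto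
  qed auto
  ultimately show ?case unfolding definable_pred_def by simp
qed simp

lemma definable_pred_nth_eqs:
  "(\<And>j. j < m \<Longrightarrow> f j < n) \<Longrightarrow> k \<le> m
    \<Longrightarrow> definable_pred S (n + m) (\<lambda>ws. \<forall>j<k. ws ! f j = ws ! (n + j))"
proof (induction k)
  case 0
  show ?case by (rule definable_pred_cong[OF definable_pred_mem[OF tuples_mem]]) simp
next
  case (Suc k)
  then have "definable_pred S (n + m) (\<lambda>ws. ws \<in> {xs. length xs = n + m \<and> xs ! f k = xs ! (n + k)})"
    by (intro definable_pred_mem diagonal_mem) (simp_all add: trans_less_add1)
  with Suc have "definable_pred S (n + m) (\<lambda>ws. (\<forall>j<k. ws ! f j = ws ! (n + j)) \<and>
      ws \<in> {xs. length xs = n + m \<and> xs ! f k = xs ! (n + k)})"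
    by (intro definable_pred_conj) auto
  then show ?case by (rule definable_pred_cong) (auto simp: less_Suc_eq)
qed

lemma definable_pred_reindex:
  assumes P: "definable_pred S m P" and f: "\<And>i. i < m \<Longrightarrow> f i < n"
  shows "definable_pred S n (\<lambda>xs. P (map (\<lambda>i. xs ! f i) [0..<m]))"
proof -
  txt \<open>Append m fresh variables, equate the j-th of them with variable f j, and project them away.\<close>
  have "definable_pred S (n + m) (\<lambda>ws. P (drop n ws) \<and> (\<forall>j<m. ws ! f j = ws ! (n + j)))"
    using P f by (intro definable_pred_conj definable_pred_drop definable_pred_nth_eqs) auto
  then have "definable_pred S n (\<lambda>xs. \<exists>zs. length zs = m \<and>
      P (drop n (xs @ zs)) \<and> (\<forall>j<m. (xs @ zs) ! f j = (xs @ zs) ! (n + j)))"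
    by (rule definable_pred_ex_suffix)
  then show ?thesis
  proof (rule definable_pred_cong)
    fix xs :: "'a list" assume len: "length xs = n"
    have "P (drop n (xs @ zs)) \<and> (\<forall>j<m. (xs @ zs) ! f j = (xs @ zs) ! (n + j))
        \<longleftrightarrow> zs = map (\<lambda>i. xs ! f i) [0..<m] \<and> P zs"
      if "length zs = m" for zs
      using f len that by (auto simp: nth_append list_eq_iff_nth_eq)
    then show "(\<exists>zs. length zs = m \<and> P (drop n (xs @ zs)) \<and>
        (\<forall>j<m. (xs @ zs) ! f j = (xs @ zs) ! (n + j))) \<longleftrightarrow> P (map (\<lambda>i. xs ! f i) [0..<m])"
      by (metis length_map length_upt minus_nat.diff_0)
  qed
qed

lemma definable_pred_less:
  assumes "i < n" "j < n"
  shows "definable_pred S n (\<lambda>xs. xs ! i < xs ! j)"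
proof -
  have "definable_pred S 2 (\<lambda>zs. zs ! 0 < zs ! 1)"
    by (rule definable_pred_cong[OF definable_pred_mem[OF less_mem]])
      (auto simp: length_Suc_conv numeral_eq_Suc)
  from definable_pred_reindex[OF this, of "\<lambda>k. if k = 0 then i else j"] assms
  show ?thesis by (simp add: numeral_eq_Suc)
qed

lemma definable_pred_eq_const:
  assumes "i < n"
  shows "definable_pred S n (\<lambda>xs. xs ! i = c)"
proof -
  have "definable_pred S 1 (\<lambda>zs. zs ! 0 = c)"
    by (rule definable_pred_cong[OF definable_pred_mem[OF singleton_mem]])
      (auto simp: length_Suc_conv)
  from definable_pred_reindex[OF this, of "\<lambda>k. i"] assms show ?thesis by simp
qed

lemma definable_pred_less_const:
  assumes "i < n"
  shows "definable_pred S n (\<lambda>xs. xs ! i < c)"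
proof -
  have "definable_pred S 2 (\<lambda>zs. zs ! 0 < zs ! 1 \<and> zs ! 1 = c)"
    by (intro definable_pred_conj definable_pred_less definable_pred_eq_const) auto
  then have "definable_pred S 1 (\<lambda>zs. zs ! 0 < c)"
    by (rule definable_pred_exI) (auto simp: nth_append)
  from definable_pred_reindex[OF this, of "\<lambda>k. i"] assms show ?thesis by simp
qed

lemma definable_pred_pair_mem:
  assumes "A \<in> S 2" "i < n" "j < n"
  shows "definable_pred S n (\<lambda>xs. [xs ! i, xs ! j] \<in> A)"
proof -
  from definable_pred_reindex[OF definable_pred_mem[OF assms(1)], of "\<lambda>k. if k = 0 then i else j"] assms
  show ?thesis by (simp add: numeral_eq_Suc)
qed

end

lemma definable1_if_definable_pred:
  assumes "definable_pred S 1 (\<lambda>xs. xs ! 0 \<in> C)"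
  shows "definable1 S C"
proof -
  have "(\<lambda>x. [x]) ` C = {xs. length xs = 1 \<and> xs ! 0 \<in> C}"
    by (auto simp: length_Suc_conv)
  with assms show ?thesis unfolding definable1_def definable_pred_def by simp
qed

lemma definably_complete_induct:
  fixes C :: "'a::linorder set"
  assumes "definably_complete S" "definable1 S C" "a \<in> C"
    and down: "\<And>x y. x \<in> C \<Longrightarrow> y \<le> x \<Longrightarrow> y \<in> C"
    and step: "\<And>s. a \<le> s \<Longrightarrow> s \<le> b \<Longrightarrow> (\<And>c. c < s \<Longrightarrow> \<exists>x\<in>C. c < x) \<Longrightarrow> \<exists>e>s. e \<in> C"
  shows "b \<in> C"
proof (rule ccontr)
  assume "b \<notin> C"
  then have bound: "\<forall>x\<in>C. x \<le> b"
    using down by (meson linear)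
  have "is_cut C"
    unfolding is_cut_def using \<open>a \<in> C\<close> down by blast
  with assms(1,2) \<open>b \<notin> C\<close> have "has_lub C"
    unfolding definably_complete_def is_gap_def by blast
  then obtain s where upper: "\<forall>x\<in>C. x \<le> s" and least: "\<And>u. \<forall>x\<in>C. x \<le> u \<Longrightarrow> s \<le> u"
    unfolding has_lub_def by blast
  have "\<exists>x\<in>C. c < x" if "c < s" for c
    using least[of c] that by (meson not_le)
  with step[of s] obtain e where "s < e" "e \<in> C"
    using upper least bound \<open>a \<in> C\<close> by blast
  with upper show False by (meson not_le)
qed

definition covered_prefixes :: "('c \<Rightarrow> 'b set) \<Rightarrow> ('b \<Rightarrow> 'a::order set) \<Rightarrow> 'a \<Rightarrow> 'a set" where
  "covered_prefixes I U a = {x. \<exists>t. {a..x} \<subseteq> (\<Union>u\<in>I t. U u)}"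

lemma covered_prefixes_down_closed:
  "x \<in> covered_prefixes I U a \<Longrightarrow> y \<le> x \<Longrightarrow> y \<in> covered_prefixes I U a"
  unfolding covered_prefixes_def by (fastforce intro: order_trans)

lemma covered_prefixes_extend:
  fixes I :: "'c::linorder \<Rightarrow> 'b set" and U :: "'b \<Rightarrow> 'a::{linorder, dense_order} set"
  assumes "mono I" "u \<in> I t" "s \<in> U u" "open_G (U u)"
    and approx: "\<And>c. c < s \<Longrightarrow> \<exists>x\<in>covered_prefixes I U a. c < x"
  shows "\<exists>e>s. e \<in> covered_prefixes I U a"
proof -
  obtain c d where "c < s" "s < d" and cd: "{c<..<d} \<subseteq> U u"
    using assms(3,4) unfolding open_G_def by blast
  obtain x where "c < x" "x \<in> covered_prefixes I U a"
    using approx \<open>c < s\<close> by blast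
  then obtain t' where x: "{a..x} \<subseteq> (\<Union>v\<in>I t'. U v)"
    unfolding covered_prefixes_def by blast
  obtain e where "s < e" "e < d"
    using dense \<open>s < d\<close> by blast
  have "I t \<subseteq> I (max t t')" "I t' \<subseteq> I (max t t')"
    using \<open>mono I\<close> by (simp_all add: monoD)
  then have "U u \<subseteq> (\<Union>v\<in>I (max t t'). U v)" "(\<Union>v\<in>I t'. U v) \<subseteq> (\<Union>v\<in>I (max t t'). U v)"
    using \<open>u \<in> I t\<close> by auto
  then have "{a..x} \<union> {c<..<d} \<subseteq> (\<Union>v\<in>I (max t t'). U v)"
    using x cd by (meson Un_least order_trans)
  moreover have "{a..e} \<subseteq> {a..x} \<union> {c<..<d}"
    using \<open>c < x\<close> \<open>e < d\<close> by auto
  ultimately have "e \<in> covered_prefixes I U a"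
    unfolding covered_prefixes_def by blast
  with \<open>s < e\<close> show ?thesis by blast
qed

lemma (in definable_sets) definable1_covered_prefixes:
  assumes "Psi \<in> S 2" "Phi \<in> S 2"
  shows "definable1 S (covered_prefixes (fiber Psi) (fiber Phi) a)"
proof -
  txt \<open>The variables x, t, y, u of the defining formula are the positions 0, 1, 2, 3.\<close>
  have "definable_pred S 4 (\<lambda>xs. [xs ! 1, xs ! 3] \<in> Psi \<and> [xs ! 3, xs ! 2] \<in> Phi)"
    using assms by (intro definable_pred_conj definable_pred_pair_mem) auto
  then have "definable_pred S 3 (\<lambda>xs. \<exists>u. [xs ! 1, u] \<in> Psi \<and> [u, xs ! 2] \<in> Phi)"
    by (rule definable_pred_exI) (simp_all add: nth_append numeral_eq_Suc)
  then have "definable_pred S 3 (\<lambda>xs. \<not> xs ! 2 < a \<and> \<not> xs ! 0 < xs ! 2 \<longrightarrow>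
      (\<exists>u. [xs ! 1, u] \<in> Psi \<and> [u, xs ! 2] \<in> Phi))"
    by (intro definable_pred_imp definable_pred_conj definable_pred_neg
        definable_pred_less_const definable_pred_less) auto
  then have "definable_pred S 2 (\<lambda>xs. \<forall>y. a \<le> y \<and> y \<le> xs ! 0 \<longrightarrow>
      (\<exists>u. [xs ! 1, u] \<in> Psi \<and> [u, y] \<in> Phi))"
    by (rule definable_pred_allI) (simp_all add: nth_append numeral_eq_Suc not_less)
  then have "definable_pred S 1 (\<lambda>xs. xs ! 0 \<in> covered_prefixes (fiber Psi) (fiber Phi) a)"
    by (rule definable_pred_exI) (auto simp: nth_append covered_prefixes_def fiber_def subset_iff)
  then show ?thesis by (rule definable1_if_definable_pred)
qed

theorem theorem3p5:
  fixes S :: "nat \<Rightarrow> ('a::{linordered_ab_group_add, dense_order}) list set set"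
    and Psi :: "'a list set"
  assumes "definable_structure S"
    and "definably_complete S"
    and "Psi \<in> S 2"
    and "\<forall>t. pseudo_finite S (fiber Psi t)"
    and "\<forall>t1 t2. t1 < t2 \<longrightarrow> fiber Psi t1 \<subseteq> fiber Psi t2"
    and "(\<Union>t. fiber Psi t) = UNIV"
  shows "\<forall>a b. a < b \<longrightarrow>
           (\<forall>Phi \<in> S 2. (\<forall>u. open_G (fiber Phi u)) \<and> {a..b} \<subseteq> (\<Union>u. fiber Phi u)
              \<longrightarrow> (\<exists>t0. {a..b} \<subseteq> (\<Union>u\<in>fiber Psi t0. fiber Phi u)))"
proof (intro allI impI ballI)
  fix a b :: 'a and Phi
  assume "a < b" and "Phi \<in> S 2"
    and cover: "(\<forall>u. open_G (fiber Phi u)) \<and> {a..b} \<subseteq> (\<Union>u. fiber Phi u)"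
  interpret definable_sets S
    using assms(1) by (rule definable_sets_if_definable_structure)
  let ?C = "covered_prefixes (fiber Psi) (fiber Phi) a"
  have mono: "mono (fiber Psi)"
    using assms(5) by (auto simp: mono_def order_le_less)
  have indexed: "\<exists>t. u \<in> fiber Psi t" for u
    using assms(6) by blast
  have "b \<in> ?C"
  proof (rule definably_complete_induct[OF assms(2)])
    show "definable1 S ?C"
      using assms(3) \<open>Phi \<in> S 2\<close> by (rule definable1_covered_prefixes)
    show "a \<in> ?C"
      using cover indexed \<open>a < b\<close> unfolding covered_prefixes_def by fastforce
    show "\<exists>e>s. e \<in> ?C" if s_range: "a \<le> s" "s \<le> b" and approx: "\<And>c. c < s \<Longrightarrow> \<exists>x\<in>?C. c < x" for s
    proof -
      obtain u where "s \<in> fiber Phi u"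
        using cover s_range by auto
      moreover obtain t where "u \<in> fiber Psi t"
        using indexed by blast
      ultimately show ?thesis
        using covered_prefixes_extend[OF mono] cover approx by blast
    qed
  qed (fact covered_prefixes_down_closed)
  then show "\<exists>t0. {a..b} \<subseteq> (\<Union>u\<in>fiber Psi t0. fiber Phi u)"
    unfolding covered_prefixes_def by blast
qed

end
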